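(* Let $K$ be a field of characteristic zero, let $A=K[Y][X;\mathrm{id}_{K[Y]},\frac{d}{dY}]$ be the first Weyl algebra, and for $k\in K$ let $\alpha_k\colon A\to A$ be the $K$-linear map with $\alpha_k(p(Y)X^m)=p(Y+k)X^m$ for all $p(Y)\in K[Y]$, $m\in\mathbb{N}$. Define $u*v:=\alpha_k(u\cdot v)$ for $u,v\in A$. Then for every $k\in K$ the hom-associative algebra $(A,*,\alpha_k)$ is simple, i.e. its only two-sided ideals (with respect to $*$) are $0$ and $A$.
   Context: The first Weyl algebra $A=K[Y][X;\mathrm{id}_{K[Y]},\frac{d}{dY}]$ consists of the polynomials $\sum_{i}p_i(Y)X^i$ with $p_i\in K[Y]$, with the associative multiplication determined by $p(Y)X^m\cdot q(Y)X^n=\sum_{i=0}^m\binom{m}{i}p(Y)q^{(m-i)}(Y)X^{i+n}$ (so $XY-YX=1$). $\mathbb{N}$ denotes the non-negative integers. An ideal of $(A,* )$ is an additive subgroup (indeed $K$-subspace) $I$ with $A*I\subseteq I$ and $I*A\subseteq I$. *)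

theory Defs
  imports "HOL-Computational_Algebra.Polynomial"
begin

text \<open>Elements of the first Weyl algebra A = K[Y][X; id, d/dY] are represented as
  polynomials in X with coefficients in K[Y], i.e. u = sum_i p_i(Y) X^i with
  p_i = coeff u i.  Type: 'a poly poly.\<close>

definition weyl_mult :: "'a::field poly poly \<Rightarrow> 'a poly poly \<Rightarrow> 'a poly poly" where
  "weyl_mult u v =
     (\<Sum>m\<le>degree u. \<Sum>n\<le>degree v. \<Sum>i\<le>m.
        monom (smult (of_nat (m choose i)) (coeff u m * (pderiv ^^ (m - i)) (coeff v n))) (i + n))"

definition weyl_alpha :: "'a::field \<Rightarrow> 'a poly poly \<Rightarrow> 'a poly poly" where
  "weyl_alpha k u = map_poly (\<lambda>p. pcompose p [:k, 1:]) u"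

definition hom_mult :: "'a::field \<Rightarrow> 'a poly poly \<Rightarrow> 'a poly poly \<Rightarrow> 'a poly poly" where
  "hom_mult k u v = weyl_alpha k (weyl_mult u v)"

definition hom_ideal :: "'a::field \<Rightarrow> 'a poly poly set \<Rightarrow> bool" where
  "hom_ideal k I \<longleftrightarrow>
     0 \<in> I \<and> (\<forall>x\<in>I. \<forall>y\<in>I. x + y \<in> I) \<and> (\<forall>x\<in>I. - x \<in> I) \<and>
     (\<forall>a x. x \<in> I \<longrightarrow> hom_mult k a x \<in> I \<and> hom_mult k x a \<in> I)"

end

theory Submission
  imports Defs
begin

text \<open>In the Weyl algebra the commutators with the generators are partial derivatives:
  \<open>X u - u X = \<partial>u/\<partial>Y\<close> and \<open>u Y - Y u = \<partial>u/\<partial>X\<close>. Since \<open>\<alpha>\<^sub>k\<close> is additive, a \<open>*\<close>-ideal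
  is therefore closed under \<open>\<alpha>\<^sub>k \<circ> \<partial>/\<partial>X\<close> and \<open>\<alpha>\<^sub>k \<circ> \<partial>/\<partial>Y\<close>. In characteristic zero both
  derivatives lower the respective degree of a nonzero element by exactly one, and \<open>\<alpha>\<^sub>k\<close>
  preserves degrees and nonvanishing, so a nonzero ideal contains a nonzero scalar \<open>c\<close>.
  As \<open>\<alpha>\<^sub>k\<close> is bijective with inverse \<open>\<alpha>\<^sub>-\<^sub>k\<close>, every \<open>b\<close> equals
  \<open>c * (c\<^sup>-\<^sup>1 \<alpha>\<^sub>-\<^sub>k(b))\<close>.\<close>

lemma higher_pderiv_one: "(pderiv ^^ j) (1::'a::field poly) = (if j = 0 then 1 else 0)"
  by (induction j) auto

lemma higher_pderiv_X: "(pderiv ^^ j) [:0, 1::'a::field:] = (if j = 0 then [:0, 1:] else if j = 1 then 1 else 0)"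
proof (cases j)
  case (Suc j')
  then show ?thesis by (simp add: funpow_swap1 pderiv_pCons higher_pderiv_one one_pCons[symmetric])
qed simp

lemma map_poly_as_sum_of_monoms:
  assumes "f 0 = 0"
  shows "map_poly f p = (\<Sum>i\<le>degree p. monom (f (coeff p i)) i)"
  by (rule poly_eqI) (use assms in \<open>auto simp: coeff_map_poly coeff_sum coeff_monom coeff_eq_0\<close>)

lemma pCons_0_as_sum_of_monoms: "pCons 0 p = (\<Sum>i\<le>degree p. monom (coeff p i) (Suc i))"
  by (rule poly_eqI) (auto simp: coeff_sum coeff_eq_0 coeff_pCons split: nat.split)

lemma smult_as_sum_of_monoms: "smult c p = (\<Sum>i\<le>degree p. monom (c * coeff p i) i)"
  by (rule poly_eqI) (auto simp: coeff_sum coeff_monom coeff_eq_0)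

lemma pderiv_as_sum_of_monoms:
  "pderiv p = (\<Sum>i\<le>degree p. monom (of_nat i * coeff p i) (i - 1))"
proof -
  have "pderiv p = pderiv (\<Sum>i\<le>degree p. monom (coeff p i) i)"
    by (simp add: poly_as_sum_of_monoms)
  also have "\<dots> = (\<Sum>i\<le>degree p. pderiv (monom (coeff p i) i))"
    using higher_pderiv_sum[of 1] by simp
  finally show ?thesis by (simp add: pderiv_monom)
qed

lemma weyl_mult_const_left: "weyl_mult [:q:] u = smult q u"
  unfolding weyl_mult_def smult_as_sum_of_monoms[of q u] by simp

lemma weyl_mult_X_left: "weyl_mult (monom 1 1) u = map_poly pderiv u + pCons 0 u"
proof -
  have "weyl_mult (monom 1 1) u =
      (\<Sum>n\<le>degree u. monom (pderiv (coeff u n)) n + monom (coeff u n) (Suc n))"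
    unfolding weyl_mult_def by (simp add: degree_monom_eq coeff_monom)
  then show ?thesis
    by (simp add: sum.distrib map_poly_as_sum_of_monoms[of pderiv] pCons_0_as_sum_of_monoms)
qed

lemma weyl_mult_X_right: "weyl_mult u (monom 1 1) = pCons 0 u"
proof -
  have "(\<Sum>i\<le>m. monom (smult (of_nat (m choose i)) (coeff u m * (pderiv ^^ (m - i)) 1)) (Suc i))
      = monom (coeff u m) (Suc m)" for m
  proof -
    have "(\<Sum>i\<le>m. monom (smult (of_nat (m choose i)) (coeff u m * (pderiv ^^ (m - i)) 1)) (Suc i))
      = (\<Sum>i\<le>m. if i = m then monom (coeff u m) (Suc m) else 0)"
      by (rule sum.cong) (auto simp: higher_pderiv_one)
    then show ?thesis by simp
  qed
  then have "weyl_mult u (monom 1 1) = (\<Sum>m\<le>degree u. monom (coeff u m) (Suc m))"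
    unfolding weyl_mult_def by (simp add: degree_monom_eq coeff_monom)
  then show ?thesis by (simp add: pCons_0_as_sum_of_monoms)
qed

lemma weyl_mult_Y_right: "weyl_mult u [:[:0, 1:]:] = smult [:0, 1:] u + pderiv u"
proof -
  have "(\<Sum>i\<le>m. monom (smult (of_nat (m choose i)) (coeff u m * (pderiv ^^ (m - i)) [:0, 1:])) i)
      = monom ([:0, 1:] * coeff u m) m + monom (of_nat m * coeff u m) (m - 1)" for m
  proof -
    have "(\<Sum>i\<le>m. monom (smult (of_nat (m choose i)) (coeff u m * (pderiv ^^ (m - i)) [:0, 1:])) i)
      = (\<Sum>i\<le>m. (if i = m then monom ([:0, 1:] * coeff u m) m else 0)
           + (if Suc i = m then monom (of_nat m * coeff u m) (m - 1) else 0))"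
      by (rule sum.cong) (auto simp: higher_pderiv_X mult.commute of_nat_mult_conv_smult)
    then show ?thesis by (cases m) (auto simp: sum.distrib)
  qed
  then have "weyl_mult u [:[:0, 1:]:] = (\<Sum>m\<le>degree u. monom ([:0, 1:] * coeff u m) m)
      + (\<Sum>m\<le>degree u. monom (of_nat m * coeff u m) (m - 1))"
    unfolding weyl_mult_def by (simp add: sum.distrib)
  then show ?thesis
    by (simp add: smult_as_sum_of_monoms[of "[:0, 1:]" u] pderiv_as_sum_of_monoms[of u])
qed

lemma weyl_commutator_X: "weyl_mult (monom 1 1) u - weyl_mult u (monom 1 1) = map_poly pderiv u"
  by (simp only: weyl_mult_X_left weyl_mult_X_right) simp

lemma weyl_commutator_Y: "weyl_mult u [:[:0, 1:]:] - weyl_mult [:[:0, 1:]:] u = pderiv u"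
  by (simp add: weyl_mult_Y_right weyl_mult_const_left)

lemma coeff_weyl_alpha: "coeff (weyl_alpha k u) n = pcompose (coeff u n) [:k, 1:]"
  by (simp add: weyl_alpha_def coeff_map_poly)

lemma weyl_alpha_diff: "weyl_alpha k (u - v) = weyl_alpha k u - weyl_alpha k v"
  by (rule poly_eqI) (simp add: coeff_weyl_alpha pcompose_diff)

lemma weyl_alpha_inverse: "weyl_alpha k (weyl_alpha (- k) u) = u"
proof (rule poly_eqI)
  fix n
  have "pcompose [:- k, 1:] [:k, 1:] = [:0, 1:]"
    by (simp add: pcompose_pCons one_pCons)
  then show "coeff (weyl_alpha k (weyl_alpha (- k) u)) n = coeff u n"
    by (simp add: coeff_weyl_alpha flip: pcompose_assoc)
qed

lemma weyl_alpha_eq_0_iff: "weyl_alpha k u = 0 \<longleftrightarrow> u = 0"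
proof
  assume "weyl_alpha k u = 0"
  then show "u = 0"
    using weyl_alpha_inverse[of "- k" u] by (simp add: weyl_alpha_def)
qed (simp add: weyl_alpha_def)

lemma degree_weyl_alpha: "degree (weyl_alpha k u) = degree u"
  unfolding weyl_alpha_def by (rule degree_map_poly) (simp add: pcompose_eq_0_iff)

lemma hom_ideal_commutator:
  assumes "hom_ideal k I" "x \<in> I"
  shows "weyl_alpha k (weyl_mult a x - weyl_mult x a) \<in> I"
    and "weyl_alpha k (weyl_mult x a - weyl_mult a x) \<in> I"
proof -
  have "hom_mult k a x + - hom_mult k x a \<in> I" "hom_mult k x a + - hom_mult k a x \<in> I"
    using assms unfolding hom_ideal_def by blast+
  then show "weyl_alpha k (weyl_mult a x - weyl_mult x a) \<in> I"
    and "weyl_alpha k (weyl_mult x a - weyl_mult a x) \<in> I"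
    by (simp_all add: hom_mult_def weyl_alpha_diff)
qed

lemma hom_ideal_pderiv_coeffs:
  assumes "hom_ideal k I" "x \<in> I"
  shows "weyl_alpha k (map_poly pderiv x) \<in> I"
  using hom_ideal_commutator(1)[OF assms, of "monom 1 1"] by (simp only: weyl_commutator_X)

lemma hom_ideal_pderiv:
  assumes "hom_ideal k I" "x \<in> I"
  shows "weyl_alpha k (pderiv x) \<in> I"
  using hom_ideal_commutator(2)[OF assms, of "[:[:0, 1:]:]"] by (simp add: weyl_commutator_Y)

lemma hom_ideal_has_nonzero_element_of_degree_0:
  fixes k :: "'a::field_char_0"
  assumes "hom_ideal k I" "x \<in> I" "x \<noteq> 0"
  shows "\<exists>p. p \<noteq> 0 \<and> [:p:] \<in> I"
  using assms(2,3)
proof (induction "degree x" arbitrary: x)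
  case 0
  then show ?case by (metis degree_0_id pCons_0_0)
next
  case (Suc n)
  let ?y = "weyl_alpha k (pderiv x)"
  have "?y \<in> I" using hom_ideal_pderiv[OF assms(1) Suc.prems(1)] .
  moreover have "degree ?y = n" "?y \<noteq> 0"
    using Suc.hyps(2) by (simp_all add: degree_weyl_alpha degree_pderiv weyl_alpha_eq_0_iff pderiv_eq_0_iff)
  ultimately show ?case using Suc.hyps(1) by metis
qed

lemma hom_ideal_has_nonzero_scalar:
  fixes k :: "'a::field_char_0"
  assumes "hom_ideal k I" "x \<in> I" "x \<noteq> 0"
  shows "\<exists>c. c \<noteq> 0 \<and> [:[:c:]:] \<in> I"
proof -
  obtain p where "p \<noteq> 0" "[:p:] \<in> I"
    using hom_ideal_has_nonzero_element_of_degree_0[OF assms] by blast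
  then show ?thesis
  proof (induction "degree p" arbitrary: p)
    case 0
    then show ?case by (metis degree_0_id pCons_0_0)
  next
    case (Suc n)
    let ?q = "pcompose (pderiv p) [:k, 1:]"
    have "weyl_alpha k (map_poly pderiv [:p:]) = [:?q:]"
      by (simp add: weyl_alpha_def map_poly_pCons)
    then have "[:?q:] \<in> I" using hom_ideal_pderiv_coeffs[OF assms(1) Suc.prems(2)] by simp
    moreover have "degree ?q = n" "?q \<noteq> 0"
      using Suc.hyps(2) by (simp_all add: degree_pcompose degree_pderiv pcompose_eq_0_iff pderiv_eq_0_iff)
    ultimately show ?case using Suc.hyps(1) by metis
  qed
qed

lemma hom_ideal_eq_UNIV_if_scalar:
  assumes "hom_ideal k I" "c \<noteq> 0" "[:[:c:]:] \<in> I"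
  shows "I = UNIV"
proof -
  have "b \<in> I" for b
  proof -
    have "hom_mult k [:[:c:]:] (smult [:inverse c:] (weyl_alpha (- k) b)) \<in> I"
      using assms(1,3) unfolding hom_ideal_def by blast
    also have "hom_mult k [:[:c:]:] (smult [:inverse c:] (weyl_alpha (- k) b)) = b"
      using assms(2) by (simp add: hom_mult_def weyl_mult_const_left weyl_alpha_inverse one_pCons[symmetric])
    finally show ?thesis .
  qed
  then show ?thesis by blast
qed

theorem mainTheorem11:
  fixes k :: "'a::field_char_0" and I :: "'a poly poly set"
  assumes "hom_ideal k I"
  shows "I = {0} \<or> I = UNIV"
proof (cases "I \<subseteq> {0}")
  case True
  with assms show ?thesis unfolding hom_ideal_def by blast
next
  case False
  then obtain x where "x \<in> I" "x \<noteq> 0" by blast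
  then obtain c where "c \<noteq> 0" "[:[:c:]:] \<in> I"
    using hom_ideal_has_nonzero_scalar[OF assms] by blast
  then show ?thesis using hom_ideal_eq_UNIV_if_scalar[OF assms] by blast
qed

end
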